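(* Let $\mathcal P$ be a pyramid. If there exist $r>0$ and $0<\kappa<1$ such that $\operatorname{Cov}(\mathcal P;r,\kappa)=+\infty$, then there is no mm-space $X$ with $\mathcal P=\mathcal P_X$.
   Context: An mm-space is a triple $(X,d_X,\mu_X)$ with $(X,d_X)$ complete separable metric and $\mu_X$ a Borel probability measure; $\mathcal X$ is the set of mm-isomorphism classes. $Y\prec X$ means there is a 1-Lipschitz $f:X\to Y$ with $f_*\mu_X=\mu_Y$. The box distance $\square(X,Y)$ is the infimum of $\max\{\operatorname{dis}(S),1-\pi(S)\}$ over couplings $\pi$ of $\mu_X,\mu_Y$ and Borel $S\subset X\times Y$, $\operatorname{dis}(S)=\sup\{|d_X(x,x')-d_Y(y,y')|:(x,y),(x',y')\in S\}$. A pyramid is a nonempty box-closed subset of $\mathcal X$ closed downward under $\prec$ and directed; $\mathcal P_X=\{Y\in\mathcal X:Y\prec X\}$. For an mm-space $X$: $\operatorname{Cov}(X;r,\kappa)=\min\{\#\mathcal N:\mathcal N\subset X,\ \mu_X(B_r(\mathcal N))\ge1-\kappa\}$ with $B_r(\mathcal N)=\{x:d_X(x,\mathcal N)\le r\}$; for a pyramid, $\operatorname{Cov}(\mathcal P;r,\kappa)=\sup_{X\in\mathcal P}\operatorname{Cov}(X;r,\kappa)$. *)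

theory Defs
  imports "HOL-Probability.Probability"
begin

text \<open>An mm-space is represented by a pair (d, mu): the carrier is space mu
  (a subset of the reals; every complete separable metric space has cardinality
  at most the continuum, so every mm-space is isomorphic to one of this form),
  d is a metric on it, and mu is a Borel probability measure.\<close>

type_synonym mm = "(real \<Rightarrow> real \<Rightarrow> real) \<times> real measure"

definition mm_space :: "mm \<Rightarrow> bool" where
  "mm_space X \<longleftrightarrow>
     (let d = fst X; \<mu> = snd X; S = space \<mu> in
       Metric_space S d \<and> Metric_space.mcomplete S d \<and>
       separable_space (Metric_space.mtopology S d) \<and>
       sets \<mu> = sigma_sets S {U. openin (Metric_space.mtopology S d) U} \<and>
       prob_space \<mu>)"

definition mm_supp :: "mm \<Rightarrow> real set" where
  "mm_supp X = {x \<in> space (snd X).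
     \<forall>e>0. emeasure (snd X) {y \<in> space (snd X). fst X x y < e} > 0}"

definition mm_iso :: "mm \<Rightarrow> mm \<Rightarrow> bool" where
  "mm_iso X Y \<longleftrightarrow> (\<exists>f. bij_betw f (mm_supp X) (mm_supp Y) \<and>
     (\<forall>x\<in>mm_supp X. \<forall>x'\<in>mm_supp X. fst Y (f x) (f x') = fst X x x') \<and>
     (\<forall>A\<in>sets (snd Y). f -` A \<inter> mm_supp X \<in> sets (snd X) \<and>
          emeasure (snd X) (f -` A \<inter> mm_supp X) = emeasure (snd Y) A))"

definition mm_prec :: "mm \<Rightarrow> mm \<Rightarrow> bool" where
  "mm_prec Y X \<longleftrightarrow> (\<exists>f. f \<in> measurable (snd X) (snd Y) \<and>
     (\<forall>x\<in>space (snd X). \<forall>x'\<in>space (snd X). fst Y (f x) (f x') \<le> fst X x x') \<and>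
     distr (snd X) (snd Y) f = snd Y)"

definition mm_prec_cls :: "mm \<Rightarrow> mm \<Rightarrow> bool" where
  "mm_prec_cls Y X \<longleftrightarrow> (\<exists>Y' X'. mm_space Y' \<and> mm_space X' \<and>
      mm_iso Y Y' \<and> mm_iso X X' \<and> mm_prec Y' X')"

definition coupling :: "mm \<Rightarrow> mm \<Rightarrow> (real \<times> real) measure \<Rightarrow> bool" where
  "coupling X Y \<pi> \<longleftrightarrow> sets \<pi> = sets (snd X \<Otimes>\<^sub>M snd Y) \<and> prob_space \<pi> \<and>
     distr \<pi> (snd X) fst = snd X \<and> distr \<pi> (snd Y) snd = snd Y"

definition mm_dis :: "mm \<Rightarrow> mm \<Rightarrow> (real \<times> real) set \<Rightarrow> ereal" where
  "mm_dis X Y S = (SUP p\<in>S. SUP q\<in>S.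
     ereal \<bar>fst X (fst p) (fst q) - fst Y (snd p) (snd q)\<bar>)"

definition box_dist :: "mm \<Rightarrow> mm \<Rightarrow> ereal" where
  "box_dist X Y = (INF \<pi>S\<in>{(\<pi>, S). coupling X Y \<pi> \<and> S \<in> sets \<pi>}.
     max (mm_dis X Y (snd \<pi>S)) (ereal (1 - measure (fst \<pi>S) (snd \<pi>S))))"

text \<open>A pyramid, as a set of mm-spaces saturated under mm-isomorphism
  (i.e. a subset of the space of isomorphism classes).\<close>
definition pyramid :: "mm set \<Rightarrow> bool" where
  "pyramid P \<longleftrightarrow> P \<subseteq> {X. mm_space X} \<and> P \<noteq> {} \<and>
     (\<forall>X\<in>P. \<forall>Y. mm_space Y \<and> mm_iso X Y \<longrightarrow> Y \<in> P) \<and>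
     (\<forall>X. mm_space X \<and> (\<forall>e>0. \<exists>Y\<in>P. box_dist X Y < ereal e) \<longrightarrow> X \<in> P) \<and>
     (\<forall>X\<in>P. \<forall>Y. mm_space Y \<and> mm_prec_cls Y X \<longrightarrow> Y \<in> P) \<and>
     (\<forall>X\<in>P. \<forall>Y\<in>P. \<exists>Z\<in>P. mm_prec_cls X Z \<and> mm_prec_cls Y Z)"

definition pyramid_of :: "mm \<Rightarrow> mm set" where
  "pyramid_of X = {Y. mm_space Y \<and> mm_prec_cls Y X}"

definition closed_nbhd :: "mm \<Rightarrow> real \<Rightarrow> real set \<Rightarrow> real set" where
  "closed_nbhd X r N = {x \<in> space (snd X). N \<noteq> {} \<and> (INF y\<in>N. fst X x y) \<le> r}"

definition ecard :: "'a set \<Rightarrow> enat" where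
  "ecard N = (if finite N then enat (card N) else \<infinity>)"

definition Cov :: "mm \<Rightarrow> real \<Rightarrow> real \<Rightarrow> enat" where
  "Cov X r \<kappa> = (INF N\<in>{N. N \<subseteq> space (snd X) \<and>
       measure (snd X) (closed_nbhd X r N) \<ge> 1 - \<kappa>}. ecard N)"

definition Cov_pyr :: "mm set \<Rightarrow> real \<Rightarrow> real \<Rightarrow> enat" where
  "Cov_pyr P r \<kappa> = (SUP X\<in>P. Cov X r \<kappa>)"

end

(* If P = P_X, the support of X has full measure (P is nonempty, so X is isomorphic to some
   mm-space) and X is separable, so finitely many points of the support have closed
   r-neighbourhoods carrying mass at least 1 - kappa inside the support. This covering
   property passes, with no more centres, to every Y below X: isomorphisms transport it
   isometrically between supports, and a 1-Lipschitz measure-preserving map sends the support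
   into the support and r-neighbourhoods into r-neighbourhoods of the image points. *)

theory Submission
  imports Defs
begin

lemma mm_space_Metric_space: "mm_space X \<Longrightarrow> Metric_space (space (snd X)) (fst X)"
  and mm_space_prob_space: "mm_space X \<Longrightarrow> prob_space (snd X)"
  and mm_space_separable:
    "mm_space X \<Longrightarrow> separable_space (Metric_space.mtopology (space (snd X)) (fst X))"
  by (simp_all add: mm_space_def Let_def)

lemma mm_space_openin_sets:
  assumes "mm_space X" "openin (Metric_space.mtopology (space (snd X)) (fst X)) U"
  shows "U \<in> sets (snd X)"
  using assms by (auto simp: mm_space_def Let_def intro: sigma_sets.Basic)

lemma mm_space_closedin_sets:
  assumes "mm_space X" "closedin (Metric_space.mtopology (space (snd X)) (fst X)) C"
  shows "C \<in> sets (snd X)"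
proof -
  have "space (snd X) - C \<in> sets (snd X)"
    using assms mm_space_openin_sets
    by (metis Metric_space.topspace_mtopology closedin_def mm_space_Metric_space)
  then have "space (snd X) - (space (snd X) - C) \<in> sets (snd X)"
    by (rule sets.compl_sets)
  moreover have "C \<subseteq> space (snd X)"
    using assms closedin_subset by (metis Metric_space.topspace_mtopology mm_space_Metric_space)
  ultimately show ?thesis
    by (simp add: double_diff)
qed

lemma closed_nbhd_finite_iff:
  assumes "finite N"
  shows "x \<in> closed_nbhd X r N \<longleftrightarrow> x \<in> space (snd X) \<and> (\<exists>y\<in>N. fst X x y \<le> r)"
  using assms by (cases "N = {}") (simp_all add: closed_nbhd_def cInf_eq_Min Min_le_iff)

lemma closed_nbhd_sets:
  assumes "mm_space X" "finite N" "N \<subseteq> space (snd X)"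
  shows "closed_nbhd X r N \<in> sets (snd X)"
proof -
  interpret Metric_space "space (snd X)" "fst X"
    using assms(1) by (rule mm_space_Metric_space)
  have "closed_nbhd X r N = (\<Union>y\<in>N. mcball y r)"
    using assms(2,3) by (auto simp: closed_nbhd_finite_iff) (metis commute subsetD)+
  also have "\<dots> \<in> sets (snd X)"
    using assms(2) by (intro sets.finite_UN mm_space_closedin_sets[OF assms(1)] closedin_mcball)
  finally show ?thesis .
qed

lemma mm_supp_subset_space: "mm_supp X \<subseteq> space (snd X)"
  by (auto simp: mm_supp_def)

lemma mm_supp_iff_mball:
  assumes "mm_space X"
  shows "x \<in> mm_supp X \<longleftrightarrow> x \<in> space (snd X) \<and>
     (\<forall>e>0. 0 < emeasure (snd X) (Metric_space.mball (space (snd X)) (fst X) x e))"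
proof -
  interpret Metric_space "space (snd X)" "fst X"
    using assms by (rule mm_space_Metric_space)
  have "{y \<in> space (snd X). fst X x y < e} = mball x e" if "x \<in> space (snd X)" for e
    using that by auto
  then show ?thesis
    by (auto simp: mm_supp_def)
qed

lemma closedin_mm_supp:
  assumes "mm_space X"
  shows "closedin (Metric_space.mtopology (space (snd X)) (fst X)) (mm_supp X)"
proof -
  interpret Metric_space "space (snd X)" "fst X"
    using assms by (rule mm_space_Metric_space)
  have "\<exists>e>0. mball x e \<subseteq> space (snd X) - mm_supp X" if x: "x \<in> space (snd X) - mm_supp X" for x
  proof -
    obtain e where e: "e > 0" "emeasure (snd X) (mball x e) = 0"
      using x by (auto simp: mm_supp_iff_mball[OF assms])
    have "z \<notin> mm_supp X" if z: "z \<in> mball x (e/2)" for z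
    proof -
      have "mball z (e/2) \<subseteq> mball x e"
        using z by (intro mball_subset) (auto simp: commute)
      then have "emeasure (snd X) (mball z (e/2)) = 0"
        using e(2) mm_space_openin_sets[OF assms] by (metis emeasure_eq_0 openin_mball)
      then show ?thesis
        using e(1) z by (auto simp: mm_supp_iff_mball[OF assms] intro!: exI[of _ "e/2"])
    qed
    then show ?thesis
      using e(1) by (intro exI[of _ "e/2"]) auto
  qed
  then show ?thesis
    by (auto simp: closedin_def openin_mtopology mm_supp_def)
qed

lemma mm_supp_sets: "mm_space X \<Longrightarrow> mm_supp X \<in> sets (snd X)"
  by (intro mm_space_closedin_sets closedin_mm_supp)

lemma mm_iso_measure_supp_eq_1:
  assumes "mm_iso X X'" "prob_space (snd X')"
  shows "measure (snd X) (mm_supp X) = 1"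
proof -
  obtain g where g: "bij_betw g (mm_supp X) (mm_supp X')"
    and preserving: "\<forall>A\<in>sets (snd X'). emeasure (snd X) (g -` A \<inter> mm_supp X) = emeasure (snd X') A"
    using assms(1) unfolding mm_iso_def by blast
  have "g -` space (snd X') \<inter> mm_supp X = mm_supp X"
    using g mm_supp_subset_space[of X'] by (auto simp: bij_betw_def)
  then have "emeasure (snd X) (mm_supp X) = emeasure (snd X') (space (snd X'))"
    using preserving by (metis sets.top)
  then show ?thesis
    using prob_space.emeasure_space_1[OF assms(2)] by (simp add: measure_def)
qed

lemma mm_prec_image_supp:
  assumes X: "mm_space X" and Y: "mm_space Y"
    and h: "h \<in> measurable (snd X) (snd Y)"
    and lipschitz: "\<forall>x\<in>space (snd X). \<forall>x'\<in>space (snd X). fst Y (h x) (h x') \<le> fst X x x'"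
    and push: "distr (snd X) (snd Y) h = snd Y"
  shows "h ` mm_supp X \<subseteq> mm_supp Y"
proof
  interpret MX: Metric_space "space (snd X)" "fst X"
    using X by (rule mm_space_Metric_space)
  interpret MY: Metric_space "space (snd Y)" "fst Y"
    using Y by (rule mm_space_Metric_space)
  fix z assume "z \<in> h ` mm_supp X"
  then obtain x where x: "x \<in> mm_supp X" and z: "z = h x"
    by blast
  have xs: "x \<in> space (snd X)"
    using x mm_supp_subset_space by blast
  have zs: "z \<in> space (snd Y)"
    using h xs z by (auto simp: measurable_def)
  have "0 < emeasure (snd Y) (MY.mball z e)" if e: "e > 0" for e
  proof -
    have ball: "MY.mball z e \<in> sets (snd Y)"
      using mm_space_openin_sets[OF Y] by simp
    have "0 < emeasure (snd X) (MX.mball x e)"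
      using x e by (simp add: mm_supp_iff_mball[OF X])
    also have "\<dots> \<le> emeasure (snd X) (h -` MY.mball z e \<inter> space (snd X))"
      using lipschitz xs z h measurable_sets[OF h ball]
      by (intro emeasure_mono) (force simp: measurable_def)+
    also have "\<dots> = emeasure (snd Y) (MY.mball z e)"
      using h ball push by (metis emeasure_distr)
    finally show ?thesis .
  qed
  then show "z \<in> mm_supp Y"
    using zs by (simp add: mm_supp_iff_mball[OF Y])
qed

text \<open>Unlike \<^const>\<open>Cov\<close>, this variant only sees the support, which makes it
  invariant under \<^const>\<open>mm_iso\<close>.\<close>
definition supp_Cov :: "mm \<Rightarrow> real \<Rightarrow> real \<Rightarrow> enat" where
  "supp_Cov X r \<kappa> = (INF N\<in>{N. finite N \<and> N \<subseteq> mm_supp X \<and>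
       measure (snd X) (closed_nbhd X r N \<inter> mm_supp X) \<ge> 1 - \<kappa>}. enat (card N))"

lemma supp_Cov_le_card:
  assumes "finite N" "N \<subseteq> mm_supp X" "measure (snd X) (closed_nbhd X r N \<inter> mm_supp X) \<ge> 1 - \<kappa>"
  shows "supp_Cov X r \<kappa> \<le> card N"
  unfolding supp_Cov_def using assms by (intro INF_lower) simp

lemma Cov_le_supp_Cov:
  assumes "mm_space X"
  shows "Cov X r \<kappa> \<le> supp_Cov X r \<kappa>"
  unfolding supp_Cov_def
proof (rule INF_greatest, clarify)
  fix N assume N: "finite N" "N \<subseteq> mm_supp X"
    and mass: "1 - \<kappa> \<le> measure (snd X) (closed_nbhd X r N \<inter> mm_supp X)"
  have space: "N \<subseteq> space (snd X)"
    using N(2) mm_supp_subset_space by blast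
  interpret prob_space "snd X"
    using assms by (rule mm_space_prob_space)
  have "measure (snd X) (closed_nbhd X r N \<inter> mm_supp X) \<le> measure (snd X) (closed_nbhd X r N)"
    using closed_nbhd_sets[OF assms N(1) space] by (intro finite_measure_mono) auto
  then have "Cov X r \<kappa> \<le> ecard N"
    unfolding Cov_def using mass space by (intro INF_lower) auto
  then show "Cov X r \<kappa> \<le> enat (card N)"
    using N(1) by (simp add: ecard_def)
qed

lemma mm_iso_closed_nbhd_measure:
  assumes "mm_iso X X'" "mm_space X'"
  obtains g where "bij_betw g (mm_supp X) (mm_supp X')"
    "\<And>N. finite N \<Longrightarrow> N \<subseteq> mm_supp X \<Longrightarrow>
       measure (snd X) (closed_nbhd X r N \<inter> mm_supp X) =
       measure (snd X') (closed_nbhd X' r (g ` N) \<inter> mm_supp X')"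
proof -
  obtain g where g: "bij_betw g (mm_supp X) (mm_supp X')"
    and isometric: "\<forall>x\<in>mm_supp X. \<forall>x'\<in>mm_supp X. fst X' (g x) (g x') = fst X x x'"
    and preserving: "\<forall>A\<in>sets (snd X'). emeasure (snd X) (g -` A \<inter> mm_supp X) = emeasure (snd X') A"
    using assms(1) unfolding mm_iso_def by blast
  have "measure (snd X) (closed_nbhd X r N \<inter> mm_supp X) =
      measure (snd X') (closed_nbhd X' r (g ` N) \<inter> mm_supp X')"
    if N: "finite N" "N \<subseteq> mm_supp X" for N
  proof -
    have "g x \<in> closed_nbhd X' r (g ` N) \<longleftrightarrow> x \<in> closed_nbhd X r N" if x: "x \<in> mm_supp X" for x
    proof -
      have "g x \<in> space (snd X')" "x \<in> space (snd X)"
        using x g mm_supp_subset_space[of X] mm_supp_subset_space[of X'] by (auto simp: bij_betw_def)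
      moreover have "fst X' (g x) (g y) = fst X x y" if "y \<in> N" for y
        using isometric x N(2) that by blast
      ultimately show ?thesis
        using N(1) by (simp add: closed_nbhd_finite_iff)
    qed
    then have "g -` (closed_nbhd X' r (g ` N) \<inter> mm_supp X') \<inter> mm_supp X = closed_nbhd X r N \<inter> mm_supp X"
      using g by (auto simp: bij_betw_def)
    moreover have "closed_nbhd X' r (g ` N) \<inter> mm_supp X' \<in> sets (snd X')"
      using N g mm_supp_subset_space[of X'] assms(2)
      by (intro sets.Int closed_nbhd_sets mm_supp_sets) (auto simp: bij_betw_def)
    ultimately show ?thesis
      using preserving by (metis measure_def)
  qed
  with g that show ?thesis
    by blast
qed

lemma supp_Cov_mm_iso:
  assumes "mm_iso X X'" "mm_space X'"
  shows "supp_Cov X' r \<kappa> = supp_Cov X r \<kappa>"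
proof -
  obtain g where g: "bij_betw g (mm_supp X) (mm_supp X')"
    and mass: "\<And>N. finite N \<Longrightarrow> N \<subseteq> mm_supp X \<Longrightarrow>
       measure (snd X) (closed_nbhd X r N \<inter> mm_supp X) =
       measure (snd X') (closed_nbhd X' r (g ` N) \<inter> mm_supp X')"
    using mm_iso_closed_nbhd_measure[OF assms] by blast
  have "supp_Cov X' r \<kappa> \<le> card N"
    if N: "finite N" "N \<subseteq> mm_supp X"
      "measure (snd X) (closed_nbhd X r N \<inter> mm_supp X) \<ge> 1 - \<kappa>" for N
  proof -
    have "g ` N \<subseteq> mm_supp X'"
      using N(2) g by (auto simp: bij_betw_def)
    then have "supp_Cov X' r \<kappa> \<le> card (g ` N)"
      using N mass[of N] by (intro supp_Cov_le_card) auto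
    also have "\<dots> \<le> card N"
      using N(1) by (simp add: card_image_le)
    finally show ?thesis .
  qed
  then have "supp_Cov X' r \<kappa> \<le> supp_Cov X r \<kappa>"
    unfolding supp_Cov_def[of X] by (intro INF_greatest) auto
  moreover have "supp_Cov X r \<kappa> \<le> card M"
    if M: "finite M" "M \<subseteq> mm_supp X'"
      "measure (snd X') (closed_nbhd X' r M \<inter> mm_supp X') \<ge> 1 - \<kappa>" for M
  proof -
    define N where "N = inv_into (mm_supp X) g ` M"
    have "g ` N = M"
      using M(2) g unfolding N_def by (simp add: bij_betw_def image_inv_into_cancel)
    moreover have "N \<subseteq> mm_supp X"
      using M(2) g unfolding N_def by (auto simp: bij_betw_def inv_into_into)
    moreover have "finite N"
      using M(1) unfolding N_def by simp
    ultimately have "supp_Cov X r \<kappa> \<le> card N"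
      using M(3) mass[of N] by (intro supp_Cov_le_card) auto
    also have "\<dots> \<le> card M"
      using M(1) unfolding N_def by (simp add: card_image_le)
    finally show ?thesis .
  qed
  then have "supp_Cov X r \<kappa> \<le> supp_Cov X' r \<kappa>"
    unfolding supp_Cov_def[of X'] by (intro INF_greatest) auto
  ultimately show ?thesis
    by (rule order.antisym)
qed

lemma supp_Cov_mm_prec:
  assumes "mm_prec Y X" and X: "mm_space X" and Y: "mm_space Y"
  shows "supp_Cov Y r \<kappa> \<le> supp_Cov X r \<kappa>"
proof -
  obtain h where h: "h \<in> measurable (snd X) (snd Y)"
    and lipschitz: "\<forall>x\<in>space (snd X). \<forall>x'\<in>space (snd X). fst Y (h x) (h x') \<le> fst X x x'"
    and push: "distr (snd X) (snd Y) h = snd Y"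
    using assms(1) unfolding mm_prec_def by blast
  have h_supp: "h ` mm_supp X \<subseteq> mm_supp Y"
    using X Y h lipschitz push by (rule mm_prec_image_supp)
  interpret prob_space "snd X"
    using X by (rule mm_space_prob_space)
  have "supp_Cov Y r \<kappa> \<le> card N"
    if N: "finite N" "N \<subseteq> mm_supp X"
      "measure (snd X) (closed_nbhd X r N \<inter> mm_supp X) \<ge> 1 - \<kappa>" for N
  proof -
    let ?C = "closed_nbhd Y r (h ` N) \<inter> mm_supp Y"
    have hN: "h ` N \<subseteq> mm_supp Y"
      using N(2) h_supp by blast
    have C: "?C \<in> sets (snd Y)"
      using N(1) hN mm_supp_subset_space[of Y] Y
      by (intro sets.Int closed_nbhd_sets mm_supp_sets) auto
    have "closed_nbhd X r N \<inter> mm_supp X \<subseteq> h -` ?C \<inter> space (snd X)"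
    proof
      fix x assume x: "x \<in> closed_nbhd X r N \<inter> mm_supp X"
      then obtain y where y: "y \<in> N" "fst X x y \<le> r" and xs: "x \<in> space (snd X)"
        using N(1) by (auto simp: closed_nbhd_finite_iff)
      have "fst Y (h x) (h y) \<le> r"
        using lipschitz xs y N(2) mm_supp_subset_space[of X] by force
      moreover have "h x \<in> mm_supp Y"
        using x h_supp by blast
      ultimately show "x \<in> h -` ?C \<inter> space (snd X)"
        using xs y N(1) mm_supp_subset_space[of Y] by (auto simp: closed_nbhd_finite_iff)
    qed
    then have "measure (snd X) (closed_nbhd X r N \<inter> mm_supp X) \<le> measure (snd X) (h -` ?C \<inter> space (snd X))"
      using measurable_sets[OF h C] by (intro finite_measure_mono)
    also have "\<dots> = measure (snd Y) ?C"
      using measure_distr[OF h C] push by simp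
    finally have "supp_Cov Y r \<kappa> \<le> card (h ` N)"
      using N hN by (intro supp_Cov_le_card) auto
    also have "\<dots> \<le> card N"
      using N(1) by (simp add: card_image_le)
    finally show ?thesis .
  qed
  then show ?thesis
    unfolding supp_Cov_def[of X] by (intro INF_greatest) auto
qed

lemma supp_Cov_mm_prec_cls:
  assumes "mm_prec_cls Y X"
  shows "supp_Cov Y r \<kappa> \<le> supp_Cov X r \<kappa>"
proof -
  obtain Y' X' where "mm_space Y'" "mm_space X'" "mm_iso Y Y'" "mm_iso X X'" "mm_prec Y' X'"
    using assms unfolding mm_prec_cls_def by blast
  then show ?thesis
    using supp_Cov_mm_prec supp_Cov_mm_iso by metis
qed

lemma (in Metric_space) separable_dense_sequence:
  assumes "separable_space mtopology" "M \<noteq> {}"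
  shows "\<exists>e :: nat \<Rightarrow> 'a. range e \<subseteq> M \<and> (\<forall>x\<in>M. \<forall>\<rho>>0. \<exists>k. d x (e k) < \<rho>)"
proof -
  obtain D where D: "countable D" "D \<subseteq> M" "mtopology closure_of D = M"
    using assms(1) unfolding separable_space_def by auto
  then have "D \<noteq> {}"
    using assms(2) by auto
  then have range: "range (from_nat_into D) = D"
    using D(1) by (rule range_from_nat_into)
  have "\<exists>k. d x (from_nat_into D k) < \<rho>" if x: "x \<in> M" and \<rho>: "\<rho> > 0" for x \<rho>
  proof -
    have "x \<in> mtopology closure_of D"
      using x D(3) by simp
    then obtain y where "y \<in> D" "y \<in> mball x \<rho>"
      using \<rho> by (auto simp: metric_closure_of)
    then show ?thesis
      using range by (metis in_mball rangeE)
  qed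
  with D(2) range show ?thesis
    by blast
qed

lemma supp_Cov_less_infinity:
  assumes X: "mm_space X" and full: "measure (snd X) (mm_supp X) = 1"
    and r: "r > 0" and \<kappa>: "\<kappa> > 0"
  shows "supp_Cov X r \<kappa> < \<infinity>"
proof -
  interpret Metric_space "space (snd X)" "fst X"
    using X by (rule mm_space_Metric_space)
  interpret prob_space "snd X"
    using X by (rule mm_space_prob_space)
  let ?A = "mm_supp X"
  have A: "?A \<in> sets (snd X)" "?A \<subseteq> space (snd X)"
    by (rule mm_supp_sets[OF X], rule mm_supp_subset_space)
  have nonempty: "space (snd X) \<noteq> {}"
    using full A(2) by auto
  obtain e :: "nat \<Rightarrow> real" where e: "range e \<subseteq> space (snd X)"
    and dense: "\<forall>x\<in>space (snd X). \<forall>\<rho>>0. \<exists>k. fst X x (e k) < \<rho>"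
    using separable_dense_sequence[OF mm_space_separable[OF X] nonempty] by blast
  define U where "U n = (\<Union>k\<le>n. mball (e k) (r/2)) \<inter> ?A" for n
  have "U n \<in> sets (snd X)" for n
    unfolding U_def using mm_space_openin_sets[OF X] A(1) by (intro sets.Int sets.finite_UN) auto
  then have U_sets: "range U \<subseteq> sets (snd X)"
    by blast
  have U_inc: "incseq U"
    unfolding incseq_def U_def by (intro allI impI Int_mono UN_mono) auto
  have U_union: "\<Union>(range U) = ?A"
  proof
    show "?A \<subseteq> \<Union>(range U)"
    proof
      fix x assume x: "x \<in> ?A"
      moreover have "r/2 > 0"
        using r by simp
      ultimately obtain k where "fst X x (e k) < r/2"
        using A(2) dense by blast
      then have "x \<in> mball (e k) (r/2)"
        using x A(2) e by (auto simp: commute)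
      then have "x \<in> U k"
        using x unfolding U_def by blast
      then show "x \<in> \<Union>(range U)"
        by blast
    qed
  qed (unfold U_def, blast)
  have "(\<lambda>n. measure (snd X) (U n)) \<longlonglongrightarrow> 1"
    using finite_Lim_measure_incseq[OF U_sets U_inc] U_union full by simp
  moreover have "1 - \<kappa> < 1"
    using \<kappa> by simp
  ultimately have "\<forall>\<^sub>F n in sequentially. 1 - \<kappa> < measure (snd X) (U n)"
    by (rule order_tendstoD(1))
  then obtain n where n: "1 - \<kappa> < measure (snd X) (U n)"
    by (auto simp: eventually_sequentially)
  text \<open>Each ball of radius r/2 around a centre e k that meets the support is replaced by
    a point of the support in it, whose closed r-ball contains the whole r/2-ball.\<close>
  define K where "K = {k. k \<le> n \<and> mball (e k) (r/2) \<inter> ?A \<noteq> {}}"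
  define s where "s k = (SOME x. x \<in> mball (e k) (r/2) \<inter> ?A)" for k
  have s: "s k \<in> mball (e k) (r/2) \<inter> ?A" if "k \<in> K" for k
  proof -
    have "\<exists>x. x \<in> mball (e k) (r/2) \<inter> ?A"
      using that unfolding K_def by blast
    then show ?thesis
      unfolding s_def by (rule someI_ex)
  qed
  define N where "N = s ` K"
  have N: "finite N" "N \<subseteq> ?A"
    using s unfolding N_def K_def by auto
  have "U n \<subseteq> closed_nbhd X r N \<inter> ?A"
  proof
    fix x assume x: "x \<in> U n"
    then obtain k where k: "k \<le> n" "x \<in> mball (e k) (r/2)" "x \<in> ?A"
      unfolding U_def by auto
    then have kK: "k \<in> K"
      unfolding K_def by auto
    have "fst X x (s k) \<le> fst X x (e k) + fst X (e k) (s k)"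
      using k s[OF kK] by (intro triangle) auto
    also have "\<dots> < r"
      using k s[OF kK] by (auto simp: commute)
    finally have "fst X x (s k) \<le> r"
      by simp
    moreover have "s k \<in> N"
      using kK unfolding N_def by blast
    ultimately show "x \<in> closed_nbhd X r N \<inter> ?A"
      using k N(1) A(2) by (auto simp: closed_nbhd_finite_iff)
  qed
  then have "measure (snd X) (U n) \<le> measure (snd X) (closed_nbhd X r N \<inter> ?A)"
    using closed_nbhd_sets[OF X N(1)] N(2) A by (intro finite_measure_mono) auto
  then have "supp_Cov X r \<kappa> \<le> card N"
    using n N by (intro supp_Cov_le_card) auto
  then show ?thesis
    by (rule order.strict_trans1) simp
qed

theorem corollary6p7:
  assumes "pyramid P"
    and "r > 0" and "0 < \<kappa>" and "\<kappa> < 1"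
    and "Cov_pyr P r \<kappa> = \<infinity>"
  shows "\<not> (\<exists>X. mm_space X \<and> P = pyramid_of X)"
proof
  assume "\<exists>X. mm_space X \<and> P = pyramid_of X"
  then obtain X where X: "mm_space X" and P: "P = pyramid_of X"
    by blast
  text \<open>P is nonempty, and any Y \<prec> X comes with an isomorphism of X onto an mm-space;
    this forces the support of X to have full measure.\<close>
  obtain Y where "Y \<in> P"
    using assms(1) unfolding pyramid_def by blast
  then obtain X' where "mm_iso X X'" "mm_space X'"
    using P unfolding pyramid_of_def mm_prec_cls_def by blast
  then have "measure (snd X) (mm_supp X) = 1"
    using mm_iso_measure_supp_eq_1 mm_space_prob_space by blast
  then have finite: "supp_Cov X r \<kappa> < \<infinity>"
    using X assms(2,3) by (intro supp_Cov_less_infinity)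
  have "Cov Y r \<kappa> \<le> supp_Cov X r \<kappa>" if "Y \<in> P" for Y
    using that P Cov_le_supp_Cov supp_Cov_mm_prec_cls unfolding pyramid_of_def
    by (blast intro: order.trans)
  then have "Cov_pyr P r \<kappa> \<le> supp_Cov X r \<kappa>"
    unfolding Cov_pyr_def by (rule SUP_least)
  with finite assms(5) show False
    by simp
qed

end
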